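(* Let $\mathcal{A}$ be a Banach algebra (real or complex) with nonzero identity $e$, and let $x\in\mathcal{A}$ be such that the partial sums $\sum_{j=0}^n x^j$, $n\ge0$, are uniformly bounded in norm. Then for $0\le r<1$ the series $\sum_{j=0}^\infty r^j x^j$ converges absolutely and equals $(e-rx)^{-1}$, these inverses are bounded in norm uniformly in $r\in[0,1)$, and $e-x$ is invertible in $\mathcal{A}$.
   Context: A Banach algebra is an associative algebra $\mathcal{A}$ over $\mathbb{R}$ or $\mathbb{C}$ with nonzero multiplicative identity $e$, complete with respect to a norm satisfying $\|ab\|\le\|a\|\,\|b\|$ and $\|e\|=1$. Powers are $x^0=e$, $x^{j+1}=x^jx$. *)

theory Defs
  imports "HOL-Analysis.Analysis"
begin

definition alg_invertible :: "'a::ring_1 \<Rightarrow> bool" where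
  "alg_invertible a \<longleftrightarrow> (\<exists>b. a * b = 1 \<and> b * a = 1)"

definition alg_inverse :: "'a::ring_1 \<Rightarrow> 'a" where
  "alg_inverse a = (THE b. a * b = 1 \<and> b * a = 1)"

end

theory Submission
  imports Defs
begin

(* Let s_n = x^0 + ... + x^n with norm s_n <= B for all n.
   (1) Summation by parts writes the Abel means sum_{j<=N} r^j x^j as a convex
       combination of s_0, ..., s_N, so they are bounded by B for 0 <= r <= 1.
       Since norm x^j <= 2B, the series sum_j r^j x^j converges absolutely for
       r < 1, and its sum still has norm at most B.
   (2) In a Banach algebra every convergent geometric series sum_j w^j is a
       two-sided inverse of 1 - w; with w = r x this gives (1 - r x)^-1 as the
       Abel series, hence the uniform bound B on these inverses.
   (3) Invertible elements form an open set: if a has inverse b and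
       norm b * norm h < 1 then a - h is invertible.  Writing
       1 - x = (1 - r x) - (1 - r) x with r close to 1 gives invertibility of 1 - x. *)

text \<open>A two-sided inverse is unique, so it is the one selected by \<open>alg_inverse\<close>.\<close>

lemma alg_inverse_eqI:
  fixes a b :: "'a::ring_1"
  assumes ab: "a * b = 1" and ba: "b * a = 1"
  shows "alg_invertible a" and "alg_inverse a = b"
proof -
  show "alg_invertible a" using ab ba unfolding alg_invertible_def by blast
  have unique: "c = b" if "a * c = 1 \<and> c * a = 1" for c
  proof -
    have "c = c * (a * b)" using ab by simp
    then show "c = b" using that by (simp add: mult.assoc[symmetric])
  qed
  show "alg_inverse a = b"
    unfolding alg_inverse_def
  proof (rule the_equality)
    show "a * b = 1 \<and> b * a = 1" using ab ba by (rule conjI)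
  qed (rule unique)
qed

lemma alg_invertible_mult:
  fixes a b :: "'a::ring_1"
  assumes "alg_invertible a" and "alg_invertible b"
  shows "alg_invertible (a * b)"
proof -
  obtain a' where a': "a * a' = 1" "a' * a = 1" using assms(1) unfolding alg_invertible_def by blast
  obtain b' where b': "b * b' = 1" "b' * b = 1" using assms(2) unfolding alg_invertible_def by blast
  have "(a * b) * (b' * a') = a * (b * b') * a'" by (simp add: mult.assoc)
  then have "(a * b) * (b' * a') = 1" using a' b' by simp
  moreover have "(b' * a') * (a * b) = b' * (a' * a) * b" by (simp add: mult.assoc)
  then have "(b' * a') * (a * b) = 1" using a' b' by simp
  ultimately show ?thesis unfolding alg_invertible_def by blast
qed

text \<open>Neumann series: a convergent geometric series \<open>\<Sum> w^j\<close> in a Banach algebra is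
  a two-sided inverse of \<open>1 - w\<close>; both products telescope to \<open>w^0 - lim w^n = 1\<close>.\<close>

lemma geometric_series_inverse:
  fixes w :: "'a::{real_normed_algebra_1, banach}"
  assumes "summable (\<lambda>j. w ^ j)"
  shows "(1 - w) * (\<Sum>j. w ^ j) = 1" and "(\<Sum>j. w ^ j) * (1 - w) = 1"
proof -
  have series: "(\<lambda>j. w ^ j) sums (\<Sum>j. w ^ j)" using assms by (rule summable_sums)
  have "(\<lambda>n. w ^ n) \<longlonglongrightarrow> 0" using assms by (rule summable_LIMSEQ_zero)
  then have "(\<lambda>j. w ^ j - w ^ Suc j) sums (w ^ 0 - 0)" by (rule telescope_sums')
  then have telescope: "(\<lambda>j. w ^ j - w ^ Suc j) sums 1" by simp
  have "(\<lambda>j. w ^ j - w ^ Suc j) sums ((1 - w) * (\<Sum>j. w ^ j))"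
    using sums_mult[OF series, of "1 - w"] by (simp add: left_diff_distrib)
  then show "(1 - w) * (\<Sum>j. w ^ j) = 1" using telescope by (rule sums_unique2)
  have "(\<lambda>j. w ^ j - w ^ Suc j) sums ((\<Sum>j. w ^ j) * (1 - w))"
    using sums_mult2[OF series, of "1 - w"]
    by (simp add: right_diff_distrib power_Suc2 del: power_Suc)
  then show "(\<Sum>j. w ^ j) * (1 - w) = 1" using telescope by (rule sums_unique2)
qed

text \<open>The invertible elements of a Banach algebra form an open set: if \<open>b\<close> inverts
  \<open>a\<close> and \<open>\<parallel>b\<parallel> \<parallel>h\<parallel> < 1\<close>, then \<open>a - h = a (1 - b h)\<close> is invertible.\<close>

lemma alg_invertible_perturb:
  fixes a b h :: "'a::{real_normed_algebra_1, banach}"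
  assumes ab: "a * b = 1" and ba: "b * a = 1" and small: "norm b * norm h < 1"
  shows "alg_invertible (a - h)"
proof -
  have "norm (b * h) < 1" using norm_mult_ineq[of b h] small by linarith
  then have "summable (\<lambda>j. (b * h) ^ j)" by (rule complete_algebra_summable_geometric)
  then have "alg_invertible (1 - b * h)"
    using geometric_series_inverse alg_inverse_eqI(1) by blast
  moreover have "alg_invertible a" using ab ba by (rule alg_inverse_eqI(1))
  moreover have "a - h = a * (1 - b * h)"
    using ab by (simp add: right_diff_distrib mult.assoc[symmetric])
  ultimately show ?thesis by (simp add: alg_invertible_mult)
qed

text \<open>Bounded partial sums give bounded terms: \<open>a_j = s_j - s_{j-1}\<close>.\<close>

lemma norm_term_le_of_partial_sums:
  fixes a :: "nat \<Rightarrow> 'a::real_normed_vector"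
  assumes bound: "\<And>n. norm (\<Sum>j\<le>n. a j) \<le> B"
  shows "norm (a j) \<le> 2 * B"
proof (cases j)
  case 0
  have "0 \<le> norm (a j)" and "norm (a j) \<le> B" using bound[of 0] 0 by simp_all
  then show ?thesis by linarith
next
  case (Suc n)
  then have "a j = (\<Sum>i\<le>Suc n. a i) - (\<Sum>i\<le>n. a i)" by simp
  then have "norm (a j) \<le> norm (\<Sum>i\<le>Suc n. a i) + norm (\<Sum>i\<le>n. a i)"
    by (metis norm_triangle_ineq4)
  then show ?thesis using bound[of n] bound[of "Suc n"] by simp
qed

text \<open>For \<open>0 \<le> r \<le> 1\<close> the weights \<open>(1 - r) r^n\<close> (\<open>n < N\<close>) and \<open>r^N\<close> add up to 1.\<close>

lemma abel_summation_by_parts: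
  fixes a :: "nat \<Rightarrow> 'a::real_vector" and r :: real
  shows "(\<Sum>j\<le>N. r ^ j *\<^sub>R a j) =
     (1 - r) *\<^sub>R (\<Sum>n<N. r ^ n *\<^sub>R (\<Sum>j\<le>n. a j)) + r ^ N *\<^sub>R (\<Sum>j\<le>N. a j)"
proof (induction N)
  case (Suc N)
  have "r ^ Suc N *\<^sub>R (\<Sum>j\<le>Suc N. a j) = r ^ Suc N *\<^sub>R (\<Sum>j\<le>N. a j) + r ^ Suc N *\<^sub>R a (Suc N)"
    by (simp add: scaleR_add_right)
  moreover have "(1 - r) *\<^sub>R (r ^ N *\<^sub>R (\<Sum>j\<le>N. a j)) + r ^ Suc N *\<^sub>R (\<Sum>j\<le>N. a j) = r ^ N *\<^sub>R (\<Sum>j\<le>N. a j)"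
    by (simp add: algebra_simps)
  ultimately show ?case using Suc by (simp add: scaleR_add_right)
qed simp

lemma norm_abel_mean_le:
  fixes a :: "nat \<Rightarrow> 'a::real_normed_vector" and r :: real
  assumes bound: "\<And>n. norm (\<Sum>j\<le>n. a j) \<le> B" and r: "0 \<le> r" "r \<le> 1"
  shows "norm (\<Sum>j\<le>N. r ^ j *\<^sub>R a j) \<le> B"
proof -
  let ?s = "\<lambda>n. \<Sum>j\<le>n. a j"
  have "norm (\<Sum>n<N. r ^ n *\<^sub>R ?s n) \<le> (\<Sum>n<N. r ^ n * B)"
    using norm_sum[of "\<lambda>n. r ^ n *\<^sub>R ?s n" "{..<N}"]
      sum_mono[of "{..<N}" "\<lambda>n. norm (r ^ n *\<^sub>R ?s n)" "\<lambda>n. r ^ n * B"]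
      bound r by (simp add: mult_left_mono)
  then have mean_part: "norm ((1 - r) *\<^sub>R (\<Sum>n<N. r ^ n *\<^sub>R ?s n)) \<le> (1 - r) * (\<Sum>n<N. r ^ n * B)"
    using r by (simp add: mult_left_mono)
  have tail_part: "norm (r ^ N *\<^sub>R ?s N) \<le> r ^ N * B"
    using r bound[of N] by (simp add: mult_left_mono)
  have "(1 - r) * (\<Sum>n<N. r ^ n * B) = ((1 - r) * (\<Sum>n<N. r ^ n)) * B"
    by (simp add: sum_distrib_right mult.assoc)
  also have "\<dots> = (1 - r ^ N) * B" by (simp add: one_diff_power_eq)
  finally have weights: "(1 - r) * (\<Sum>n<N. r ^ n * B) + r ^ N * B = B"
    by (simp add: algebra_simps)
  show ?thesis
    unfolding abel_summation_by_parts
    using norm_triangle_le[OF add_mono[OF mean_part tail_part]] weights by simp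
qed

lemma abel_series_bounded:
  fixes a :: "nat \<Rightarrow> 'a::banach" and r :: real
  assumes bound: "\<And>n. norm (\<Sum>j\<le>n. a j) \<le> B" and r: "0 \<le> r" "r < 1"
  shows "summable (\<lambda>j. norm (r ^ j *\<^sub>R a j))" and "norm (\<Sum>j. r ^ j *\<^sub>R a j) \<le> B"
proof -
  have dominated: "norm (r ^ j *\<^sub>R a j) \<le> 2 * B * r ^ j" for j
  proof -
    have "norm (r ^ j *\<^sub>R a j) = r ^ j * norm (a j)" using r by simp
    also have "\<dots> \<le> r ^ j * (2 * B)"
      using norm_term_le_of_partial_sums[OF bound, of j] r by (simp add: mult_left_mono)
    finally show ?thesis by (simp add: ac_simps)
  qed
  have "summable (\<lambda>j. 2 * B * r ^ j)"
    using r by (intro summable_mult summable_geometric) simp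
  then show abs_conv: "summable (\<lambda>j. norm (r ^ j *\<^sub>R a j))"
    by (rule summable_comparison_test[rotated]) (use dominated in simp)
  have "(\<lambda>N. \<Sum>j\<le>N. r ^ j *\<^sub>R a j) \<longlonglongrightarrow> (\<Sum>j. r ^ j *\<^sub>R a j)"
    using summable_LIMSEQ'[OF summable_norm_cancel[OF abs_conv]] .
  then show "norm (\<Sum>j. r ^ j *\<^sub>R a j) \<le> B"
    by (rule LIMSEQ_le_const2[OF tendsto_norm]) (use norm_abel_mean_le[OF bound] r in auto)
qed

theorem mainTheorem6:
  fixes x :: "'a::{real_normed_algebra_1, banach}"
  assumes bdd: "\<exists>B. \<forall>n. norm (\<Sum>j\<le>n. x ^ j) \<le> B"
  shows "(\<forall>r::real. 0 \<le> r \<and> r < 1 \<longrightarrow>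
            summable (\<lambda>j. norm ((r ^ j) *\<^sub>R x ^ j)) \<and>
            alg_invertible (1 - r *\<^sub>R x) \<and>
            (\<Sum>j. (r ^ j) *\<^sub>R x ^ j) = alg_inverse (1 - r *\<^sub>R x))
       \<and> (\<exists>M. \<forall>r::real. 0 \<le> r \<and> r < 1 \<longrightarrow> norm (alg_inverse (1 - r *\<^sub>R x)) \<le> M)
       \<and> alg_invertible (1 - x)"
proof -
  obtain B where B: "\<And>n. norm (\<Sum>j\<le>n. x ^ j) \<le> B" using bdd by blast
  let ?y = "\<lambda>r::real. \<Sum>j. (r ^ j) *\<^sub>R x ^ j"
  have abel: "summable (\<lambda>j. norm ((r ^ j) *\<^sub>R x ^ j)) \<and>
      (1 - r *\<^sub>R x) * ?y r = 1 \<and> ?y r * (1 - r *\<^sub>R x) = 1 \<and> norm (?y r) \<le> B"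
    if r: "0 \<le> r" "r < 1" for r :: real
  proof -
    note series = abel_series_bounded[of "\<lambda>j. x ^ j", OF B r]
    have "summable (\<lambda>j. (r *\<^sub>R x) ^ j)" using summable_norm_cancel[OF series(1)] by simp
    from geometric_series_inverse[OF this]
    have "(1 - r *\<^sub>R x) * ?y r = 1" and "?y r * (1 - r *\<^sub>R x) = 1" by simp_all
    with series show ?thesis by blast
  qed
  have inverse: "alg_invertible (1 - r *\<^sub>R x)" "alg_inverse (1 - r *\<^sub>R x) = ?y r"
    if "0 \<le> r" "r < 1" for r :: real
    using alg_inverse_eqI abel[OF that] by blast+
  text \<open>Choose \<open>r\<close> with \<open>(1 - r) B \<parallel>x\<parallel> < 1\<close> and perturb \<open>1 - r x\<close> by \<open>(1 - r) x\<close>.\<close>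
  have B0: "0 \<le> B" by (rule order_trans[OF norm_ge_zero B])
  define c where "c = B * norm x + 1"
  have c: "1 \<le> c" using B0 unfolding c_def by simp
  define r where "r = 1 - 1 / c"
  have "0 < 1 / c" "1 / c \<le> 1" using c by simp_all
  then have r: "0 \<le> r" "r < 1" unfolding r_def by linarith+
  have "norm (?y r) * norm ((1 - r) *\<^sub>R x) \<le> B * ((1 - r) * norm x)"
    using abel[OF r] r B0 by (intro mult_mono) simp_all
  also have "\<dots> = (B * norm x) / c" unfolding r_def by simp
  also have "\<dots> < 1" using c unfolding c_def by simp
  finally have "alg_invertible ((1 - r *\<^sub>R x) - (1 - r) *\<^sub>R x)"
    using abel[OF r] alg_invertible_perturb by blast
  moreover have "(1 - r *\<^sub>R x) - (1 - r) *\<^sub>R x = 1 - x" by (simp add: scaleR_diff_left)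
  ultimately have "alg_invertible (1 - x)" by simp
  then show ?thesis using abel inverse by (metis (no_types, lifting))
qed

end
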